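(* Let $n\ge 1$ and let $S\in Sp(4n,\mathbb{R})$ be written in $2n\times 2n$ blocks. Suppose that for all covariance matrices $\varGamma_1,\varGamma_2\in\mathbb{R}^{2n\times 2n}$ the matrix $$S\begin{pmatrix}\varGamma_1&0\\0&\varGamma_2\end{pmatrix}S^{T}$$ is block diagonal, i.e. of the form $\begin{pmatrix}\cdot&0\\0&*\end{pmatrix}$ with $2n\times 2n$ diagonal blocks (which are covariance matrices). Then $S$ is either of the form $\begin{pmatrix}A&0\\0&D\end{pmatrix}$ or of the form $\begin{pmatrix}0&B\\C&0\end{pmatrix}$ with $A,B,C,D\in Sp(2n,\mathbb{R})$.
   Context: $\sigma=\bigoplus_{i=1}^{n}\omega$ with $\omega=\begin{pmatrix}0&1\\-1&0\end{pmatrix}$ is the $2n\times 2n$ symplectic form (and $\sigma\oplus\sigma$ the $4n\times4n$ one). $Sp(2m,\mathbb{R})$ is the group of real $2m\times 2m$ matrices $S$ with $S\sigma S^T=\sigma$. A covariance matrix (CM) is a real symmetric $2n\times 2n$ matrix $\varGamma$ satisfying $\varGamma+i\sigma\ge 0$. *)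

theory Defs
  imports "Jordan_Normal_Form.Matrix"
begin

(* The 2m x 2m symplectic form sigma = direct sum of m copies of omega = [[0,1],[-1,0]].
   Note: symp_form (2*n) is exactly sigma (+) sigma for the 2n x 2n form sigma. *)
definition symp_form :: "nat \<Rightarrow> real mat" where
  "symp_form m = mat (2*m) (2*m) (\<lambda>(i,j).
      if even i \<and> j = i + 1 then 1
      else if odd i \<and> i = j + 1 then -1 else 0)"

definition symplectic :: "nat \<Rightarrow> real mat \<Rightarrow> bool" where
  "symplectic m S \<longleftrightarrow> S \<in> carrier_mat (2*m) (2*m) \<and>
      S * symp_form m * transpose_mat S = symp_form m"

definition cpsd :: "nat \<Rightarrow> complex mat \<Rightarrow> bool" where
  "cpsd k M \<longleftrightarrow> M \<in> carrier_mat k k \<and>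
     (\<forall>v \<in> carrier_vec k. Im (conjugate v \<bullet> (M *\<^sub>v v)) = 0 \<and>
                            Re (conjugate v \<bullet> (M *\<^sub>v v)) \<ge> 0)"

definition covariance_matrix :: "nat \<Rightarrow> real mat \<Rightarrow> bool" where
  "covariance_matrix n G \<longleftrightarrow> G \<in> carrier_mat (2*n) (2*n) \<and> transpose_mat G = G \<and>
     cpsd (2*n) (map_mat complex_of_real G + \<i> \<cdot>\<^sub>m map_mat complex_of_real (symp_form n))"

end

theory Submission
  imports Defs
begin

(* Every matrix 1 + v v^T is a covariance matrix, because 1 + i sigma >= 0, i.e.
   2 x^T sigma y <= |x|^2 + |y|^2.  Write S = [[A, B], [C, D]]; the upper right block of
   S diag(G1, G2) S^T is A G1 C^T + B G2 D^T.  Taking G1 = 1 + v v^T, G2 = 1 and subtracting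
   the case v = 0 leaves (A v)(C v)^T = 0, so the kernels of A and C cover the whole space,
   and since a vector space is not the union of two proper subspaces, A = 0 or C = 0;
   likewise B = 0 or D = 0.  Finally, S sigma S^T = sigma gives
   A sigma A^T + B sigma B^T = sigma = C sigma C^T + D sigma D^T, which rules out A = B = 0
   and C = D = 0 and makes the two remaining blocks symplectic. *)

definition bilin_form :: "real mat \<Rightarrow> (nat \<Rightarrow> real) \<Rightarrow> (nat \<Rightarrow> real) \<Rightarrow> real" where
  "bilin_form K x y = (\<Sum>i<dim_row K. \<Sum>j<dim_col K. K $$ (i,j) * x i * y j)"

lemma bilin_form_transpose: "bilin_form (transpose_mat K) x y = bilin_form K y x"
  unfolding bilin_form_def by (subst sum.swap) (simp add: mult.commute mult.left_commute)

lemma bilin_form_uminus: "bilin_form (- K) x y = - bilin_form K x y"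
  unfolding bilin_form_def by (simp add: sum_negf)

(* the unique column in which row i of symp_form has a nonzero entry *)
definition symp_partner :: "nat \<Rightarrow> nat" where
  "symp_partner i = (if even i then i + 1 else i - 1)"

lemma symp_partner_less: "i < 2*n \<Longrightarrow> symp_partner i < 2*n"
  unfolding symp_partner_def by (cases "even i") (auto elim!: evenE)

lemma symp_partner_symp_partner: "symp_partner (symp_partner i) = i"
  unfolding symp_partner_def by (cases "even i") (auto elim!: oddE)

lemma dim_symp_form [simp]: "dim_row (symp_form n) = 2*n" "dim_col (symp_form n) = 2*n"
  by (simp_all add: symp_form_def)

lemma symp_form_carrier: "symp_form n \<in> carrier_mat (2*n) (2*n)"
  by (simp add: carrier_matI)

lemma index_symp_form:
  assumes "i < 2*n" "j < 2*n"
  shows "symp_form n $$ (i,j) = (if j = symp_partner i then (if even i then 1 else -1) else 0)"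
  using assms unfolding symp_form_def symp_partner_def by (cases "even i") (auto elim!: oddE)

lemma transpose_symp_form: "transpose_mat (symp_form n) = - symp_form n"
  by (rule eq_matI) (auto simp: symp_form_def)

lemma symp_form_nonzero:
  assumes "n \<ge> 1"
  shows "symp_form n \<noteq> 0\<^sub>m (2*n) (2*n)"
proof
  assume "symp_form n = 0\<^sub>m (2*n) (2*n)"
  then have "symp_form n $$ (0,1) = 0\<^sub>m (2*n) (2*n) $$ (0,1)" by simp
  with assms show False by (simp add: symp_form_def)
qed

lemma symp_form_double:
  "symp_form (2*n) = four_block_mat (symp_form n) (0\<^sub>m (2*n) (2*n)) (0\<^sub>m (2*n) (2*n)) (symp_form n)"
proof (rule eq_matI)
  fix i j assume "i < dim_row (four_block_mat (symp_form n) (0\<^sub>m (2*n) (2*n)) (0\<^sub>m (2*n) (2*n)) (symp_form n))"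
    "j < dim_col (four_block_mat (symp_form n) (0\<^sub>m (2*n) (2*n)) (0\<^sub>m (2*n) (2*n)) (symp_form n))"
  then have ij: "i < 4*n" "j < 4*n" by auto
  show "symp_form (2*n) $$ (i,j)
      = four_block_mat (symp_form n) (0\<^sub>m (2*n) (2*n)) (0\<^sub>m (2*n) (2*n)) (symp_form n) $$ (i,j)"
  proof (cases "i < 2*n")
    case True
    then show ?thesis using ij by (auto simp: symp_form_def)
  next
    case False
    then obtain a where a: "i = 2*n + a" by (metis le_add_diff_inverse not_less)
    show ?thesis
    proof (cases "j < 2*n")
      case True
      have "\<not> (odd i \<and> i = j + 1)"
      proof
        assume h: "odd i \<and> i = j + 1"
        then have "a = 0" using a True by linarith
        then show False using h a by simp
      qed
      then show ?thesis using ij False True a by (auto simp: symp_form_def)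
    next
      case False2: False
      then obtain b where b: "j = 2*n + b" by (metis le_add_diff_inverse not_less)
      show ?thesis using ij False False2 a b by (auto simp: symp_form_def)
    qed
  qed
qed auto

lemma bilin_form_symp_form_le:
  "2 * bilin_form (symp_form n) x y \<le> (\<Sum>i<2*n. (x i)\<^sup>2) + (\<Sum>i<2*n. (y i)\<^sup>2)"
proof -
  define s :: "nat \<Rightarrow> real" where "s i = (if even i then 1 else -1)" for i
  have "bilin_form (symp_form n) x y = (\<Sum>i<2*n. x i * (s i * y (symp_partner i)))"
  proof -
    have "bilin_form (symp_form n) x y
        = (\<Sum>i<2*n. \<Sum>j<2*n. if j = symp_partner i then x i * (s i * y j) else 0)"
      unfolding bilin_form_def by (intro sum.cong) (auto simp: index_symp_form s_def)
    then show ?thesis by (simp add: symp_partner_less)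
  qed
  moreover have "2 * (x i * (s i * y (symp_partner i))) \<le> (x i)\<^sup>2 + (y (symp_partner i))\<^sup>2" for i
    using sum_squares_bound[of "x i" "s i * y (symp_partner i)"]
    by (cases "even i") (simp_all add: s_def)
  then have "2 * (\<Sum>i<2*n. x i * (s i * y (symp_partner i)))
      \<le> (\<Sum>i<2*n. (x i)\<^sup>2) + (\<Sum>i<2*n. (y (symp_partner i))\<^sup>2)"
    by (simp add: sum_distrib_left sum.distrib[symmetric] sum_mono)
  moreover have "(\<Sum>i<2*n. (y (symp_partner i))\<^sup>2) = (\<Sum>i<2*n. (y i)\<^sup>2)"
    by (rule sum.reindex_bij_witness[of _ symp_partner symp_partner])
      (auto simp: symp_partner_less symp_partner_symp_partner)
  ultimately show ?thesis by simp
qed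

lemma hermitian_form_expand:
  fixes G K :: "real mat" and v :: "complex vec"
  assumes G: "G \<in> carrier_mat k k" and K: "K \<in> carrier_mat k k" and v: "v \<in> carrier_vec k"
  defines "x \<equiv> \<lambda>i. Re (v $ i)" and "y \<equiv> \<lambda>i. Im (v $ i)"
  shows "conjugate v \<bullet> ((map_mat complex_of_real G + \<i> \<cdot>\<^sub>m map_mat complex_of_real K) *\<^sub>v v)
    = Complex (bilin_form G x x + bilin_form G y y - bilin_form K x y + bilin_form K y x)
              (bilin_form G x y - bilin_form G y x + bilin_form K x x + bilin_form K y y)"
proof -
  have "conjugate v \<bullet> ((map_mat complex_of_real G + \<i> \<cdot>\<^sub>m map_mat complex_of_real K) *\<^sub>v v)
      = (\<Sum>i<k. \<Sum>j<k. cnj (v $ i) * ((of_real (G $$ (i,j)) + \<i> * of_real (K $$ (i,j))) * v $ j))"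
    using G K v by (auto simp: scalar_prod_def atLeast0LessThan sum_distrib_left intro!: sum.cong)
  also have "\<dots> = (\<Sum>i<k. \<Sum>j<k. Complex
      (G $$ (i,j) * x i * x j + G $$ (i,j) * y i * y j - K $$ (i,j) * x i * y j + K $$ (i,j) * y i * x j)
      (G $$ (i,j) * x i * y j - G $$ (i,j) * y i * x j + K $$ (i,j) * x i * x j + K $$ (i,j) * y i * y j))"
    unfolding x_def y_def by (intro sum.cong refl) (simp add: complex_eq_iff algebra_simps)
  also have "\<dots> = Complex
      (\<Sum>i<k. \<Sum>j<k. G $$ (i,j) * x i * x j + G $$ (i,j) * y i * y j - K $$ (i,j) * x i * y j + K $$ (i,j) * y i * x j)
      (\<Sum>i<k. \<Sum>j<k. G $$ (i,j) * x i * y j - G $$ (i,j) * y i * x j + K $$ (i,j) * x i * x j + K $$ (i,j) * y i * y j)"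
    by (simp add: complex_eq_iff)
  also have "\<dots> = Complex (bilin_form G x x + bilin_form G y y - bilin_form K x y + bilin_form K y x)
              (bilin_form G x y - bilin_form G y x + bilin_form K x x + bilin_form K y y)"
    using G K unfolding bilin_form_def by (simp only: carrier_matD sum.distrib sum_subtractf)
  finally show ?thesis .
qed

lemma covariance_matrix_if_ge_one:
  assumes G: "G \<in> carrier_mat (2*n) (2*n)" and sym: "transpose_mat G = G"
    and ge: "\<And>x. (\<Sum>i<2*n. (x i)\<^sup>2) \<le> bilin_form G x x"
  shows "covariance_matrix n G"
  unfolding covariance_matrix_def cpsd_def
proof (intro conjI ballI G sym)
  let ?M = "map_mat complex_of_real G + \<i> \<cdot>\<^sub>m map_mat complex_of_real (symp_form n)"
  show "?M \<in> carrier_mat (2*n) (2*n)"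
    using G symp_form_carrier[of n] by simp
  fix v :: "complex vec" assume v: "v \<in> carrier_vec (2*n)"
  define x y where "x = (\<lambda>i. Re (v $ i))" and "y = (\<lambda>i. Im (v $ i))"
  have G_sym: "bilin_form G y x = bilin_form G x y"
    using bilin_form_transpose[of G x y] sym by simp
  have J_antisym: "bilin_form (symp_form n) y x = - bilin_form (symp_form n) x y" for x y
    using bilin_form_transpose[of "symp_form n" x y] by (simp add: transpose_symp_form bilin_form_uminus)
  have J_diag: "bilin_form (symp_form n) x x = 0" for x
    using J_antisym[of x x] by linarith
  have "conjugate v \<bullet> (?M *\<^sub>v v)
      = Complex (bilin_form G x x + bilin_form G y y - bilin_form (symp_form n) x y + bilin_form (symp_form n) y x)
          (bilin_form G x y - bilin_form G y x + bilin_form (symp_form n) x x + bilin_form (symp_form n) y y)"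
    unfolding x_def y_def by (rule hermitian_form_expand[OF G symp_form_carrier v])
  also have "\<dots> = Complex (bilin_form G x x + bilin_form G y y - 2 * bilin_form (symp_form n) x y) 0"
    by (simp only: G_sym J_antisym[of x y] J_diag) simp
  finally have q: "conjugate v \<bullet> (?M *\<^sub>v v)
      = Complex (bilin_form G x x + bilin_form G y y - 2 * bilin_form (symp_form n) x y) 0" .
  show "Im (conjugate v \<bullet> (?M *\<^sub>v v)) = 0"
    unfolding q by simp
  show "Re (conjugate v \<bullet> (?M *\<^sub>v v)) \<ge> 0"
    unfolding q using ge[of x] ge[of y] bilin_form_symp_form_le[of n x y] by simp
qed

definition one_plus_outer :: "nat \<Rightarrow> real vec \<Rightarrow> real mat" where
  "one_plus_outer k v = 1\<^sub>m k + mat k k (\<lambda>(i,j). v $ i * v $ j)"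

lemma one_plus_outer_carrier: "one_plus_outer k v \<in> carrier_mat k k"
  by (simp add: one_plus_outer_def)

lemma covariance_matrix_one_plus_outer: "covariance_matrix n (one_plus_outer (2*n) v)"
proof (rule covariance_matrix_if_ge_one[OF one_plus_outer_carrier])
  show "transpose_mat (one_plus_outer (2*n) v) = one_plus_outer (2*n) v"
    by (rule eq_matI) (auto simp: one_plus_outer_def)
  fix x :: "nat \<Rightarrow> real"
  have "bilin_form (one_plus_outer (2*n) v) x x
      = (\<Sum>i<2*n. \<Sum>j<2*n. (if i = j then x i * x j else 0) + (v $ i * x i) * (v $ j * x j))"
    unfolding bilin_form_def by (intro sum.cong) (auto simp: one_plus_outer_def algebra_simps)
  also have "\<dots> = (\<Sum>i<2*n. (x i)\<^sup>2) + (\<Sum>i<2*n. v $ i * x i)\<^sup>2"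
    by (simp add: sum.distrib power2_eq_square sum_product)
  finally show "(\<Sum>i<2*n. (x i)\<^sup>2) \<le> bilin_form (one_plus_outer (2*n) v) x x" by simp
qed

lemma index_mult_mat_sum:
  "A \<in> carrier_mat m k \<Longrightarrow> B \<in> carrier_mat k p \<Longrightarrow> i < m \<Longrightarrow> j < p \<Longrightarrow>
   (A * B) $$ (i,j) = (\<Sum>l<k. A $$ (i,l) * B $$ (l,j))"
  by (auto simp: scalar_prod_def atLeast0LessThan intro!: sum.cong)

lemma index_mult_mat_vec_sum:
  "A \<in> carrier_mat m k \<Longrightarrow> v \<in> carrier_vec k \<Longrightarrow> i < m \<Longrightarrow>
   (A *\<^sub>v v) $ i = (\<Sum>l<k. A $$ (i,l) * v $ l)"
  by (auto simp: scalar_prod_def atLeast0LessThan intro!: sum.cong)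

lemma one_plus_outer_congruence_index:
  fixes X Y :: "real mat"
  assumes X: "X \<in> carrier_mat m k" and Y: "Y \<in> carrier_mat p k" and v: "v \<in> carrier_vec k"
    and i: "i < m" and j: "j < p"
  shows "(X * one_plus_outer k v * transpose_mat Y) $$ (i,j)
    = (X * transpose_mat Y) $$ (i,j) + (X *\<^sub>v v) $ i * (Y *\<^sub>v v) $ j"
proof -
  have O: "one_plus_outer k v \<in> carrier_mat k k" by (rule one_plus_outer_carrier)
  have Yt: "transpose_mat Y \<in> carrier_mat k p" using Y by simp
  have Xv: "(X *\<^sub>v v) $ i = (\<Sum>l<k. X $$ (i,l) * v $ l)"
    by (rule index_mult_mat_vec_sum[OF X v i])
  have Yv: "(Y *\<^sub>v v) $ j = (\<Sum>l<k. Y $$ (j,l) * v $ l)"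
    by (rule index_mult_mat_vec_sum[OF Y v j])
  have XO: "(X * one_plus_outer k v) $$ (i,l) = X $$ (i,l) + (X *\<^sub>v v) $ i * v $ l" if "l < k" for l
  proof -
    have "(X * one_plus_outer k v) $$ (i,l) = (\<Sum>r<k. X $$ (i,r) * one_plus_outer k v $$ (r,l))"
      by (rule index_mult_mat_sum[OF X O i that])
    also have "\<dots> = (\<Sum>r<k. (if r = l then X $$ (i,r) else 0) + X $$ (i,r) * v $ r * v $ l)"
      using that by (intro sum.cong) (auto simp: one_plus_outer_def algebra_simps)
    also have "\<dots> = X $$ (i,l) + (X *\<^sub>v v) $ i * v $ l"
      using that by (simp add: Xv sum.distrib sum_distrib_right)
    finally show ?thesis .
  qed
  have "(X * one_plus_outer k v * transpose_mat Y) $$ (i,j)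
      = (\<Sum>l<k. (X * one_plus_outer k v) $$ (i,l) * transpose_mat Y $$ (l,j))"
    by (rule index_mult_mat_sum[OF mult_carrier_mat[OF X O] Yt i j])
  also have "\<dots> = (\<Sum>l<k. (X $$ (i,l) + (X *\<^sub>v v) $ i * v $ l) * Y $$ (j,l))"
    using Y j by (intro sum.cong) (simp_all add: XO)
  also have "\<dots> = (X * transpose_mat Y) $$ (i,j) + (X *\<^sub>v v) $ i * (Y *\<^sub>v v) $ j"
    unfolding index_mult_mat_sum[OF X Yt i j] Yv using Y j
    by (simp add: algebra_simps sum.distrib sum_distrib_left)
  finally show ?thesis .
qed

lemma outer_product_eq_zero:
  fixes a b :: "'a :: semiring_no_zero_divisors vec"
  assumes "a \<in> carrier_vec m" "b \<in> carrier_vec p" "\<And>i j. i < m \<Longrightarrow> j < p \<Longrightarrow> a $ i * b $ j = 0"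
  shows "a = 0\<^sub>v m \<or> b = 0\<^sub>v p"
proof (rule ccontr)
  assume "\<not> ?thesis"
  then obtain i j where "i < m" "a $ i \<noteq> 0" "j < p" "b $ j \<noteq> 0"
    using assms(1,2) by (auto simp: vec_eq_iff)
  then show False using assms(3)[of i j] by simp
qed

lemma mult_mat_vec_nonzero_witness:
  fixes M :: "'a :: semiring_1 mat"
  assumes M: "M \<in> carrier_mat r k" and nz: "M \<noteq> 0\<^sub>m r k"
  obtains v where "v \<in> carrier_vec k" "M *\<^sub>v v \<noteq> 0\<^sub>v r"
proof -
  obtain i j where ij: "i < r" "j < k" "M $$ (i,j) \<noteq> 0"
    using nz M unfolding mat_eq_iff by auto
  have "(M *\<^sub>v unit_vec k j) $ i = M $$ (i,j)"
    using M ij by simp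
  then have "M *\<^sub>v unit_vec k j \<noteq> 0\<^sub>v r"
    using ij by (metis index_zero_vec(1))
  then show ?thesis using that unit_vec_carrier by blast
qed

lemma kernels_cover_imp_zero_mat:
  fixes A C :: "'a :: comm_ring_1 mat"
  assumes A: "A \<in> carrier_mat m k" and C: "C \<in> carrier_mat p k"
    and cover: "\<And>v. v \<in> carrier_vec k \<Longrightarrow> A *\<^sub>v v = 0\<^sub>v m \<or> C *\<^sub>v v = 0\<^sub>v p"
  shows "A = 0\<^sub>m m k \<or> C = 0\<^sub>m p k"
proof (rule ccontr)
  assume "\<not> ?thesis"
  then have "A \<noteq> 0\<^sub>m m k" "C \<noteq> 0\<^sub>m p k" by simp_all
  then obtain v w where v: "v \<in> carrier_vec k" "A *\<^sub>v v \<noteq> 0\<^sub>v m"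
    and w: "w \<in> carrier_vec k" "C *\<^sub>v w \<noteq> 0\<^sub>v p"
    using mult_mat_vec_nonzero_witness A C by metis
  have "C *\<^sub>v v = 0\<^sub>v p" "A *\<^sub>v w = 0\<^sub>v m"
    using cover v w by auto
  then have "A *\<^sub>v (v + w) = A *\<^sub>v v" "C *\<^sub>v (v + w) = C *\<^sub>v w"
    using A C v w by (simp_all add: mult_add_distrib_mat_vec)
  then show False
    using cover[of "v + w"] v w by auto
qed

lemma zero_mat_if_rank_one_congruence_const:
  fixes X Y W :: "real mat"
  assumes X: "X \<in> carrier_mat m k" and Y: "Y \<in> carrier_mat p k" and W: "W \<in> carrier_mat m p"
    and vanish: "\<And>v. v \<in> carrier_vec k \<Longrightarrow> X * one_plus_outer k v * transpose_mat Y + W = 0\<^sub>m m p"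
  shows "X = 0\<^sub>m m k \<or> Y = 0\<^sub>m p k"
proof (rule kernels_cover_imp_zero_mat[OF X Y])
  (* comparing v with v = 0 isolates the rank one term (X v)(Y v)^T *)
  have entry: "(X * transpose_mat Y) $$ (i,j) + (X *\<^sub>v v) $ i * (Y *\<^sub>v v) $ j + W $$ (i,j) = 0"
    if v: "v \<in> carrier_vec k" and ij: "i < m" "j < p" for v i j
  proof -
    have "(X * one_plus_outer k v * transpose_mat Y + W) $$ (i,j) = 0"
      using vanish[OF v] ij by simp
    then show ?thesis
      using W ij by (simp del: index_mult_mat add: one_plus_outer_congruence_index[OF X Y v ij])
  qed
  fix v :: "real vec" assume v: "v \<in> carrier_vec k"
  have "(X *\<^sub>v v) $ i * (Y *\<^sub>v v) $ j = 0" if "i < m" "j < p" for i j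
  proof -
    have "(X *\<^sub>v 0\<^sub>v k) $ i * (Y *\<^sub>v 0\<^sub>v k) $ j = 0" using X Y that by simp
    then show ?thesis using entry[OF v that] entry[OF zero_carrier_vec that] by linarith
  qed
  then show "X *\<^sub>v v = 0\<^sub>v m \<or> Y *\<^sub>v v = 0\<^sub>v p"
    using X Y v by (intro outer_product_eq_zero) auto
qed

lemma four_block_mat_inject:
  assumes "A1 \<in> carrier_mat r1 c1" "A2 \<in> carrier_mat r1 c1" "B1 \<in> carrier_mat r1 c2" "B2 \<in> carrier_mat r1 c2"
    "C1 \<in> carrier_mat r2 c1" "C2 \<in> carrier_mat r2 c1" "D1 \<in> carrier_mat r2 c2" "D2 \<in> carrier_mat r2 c2"
  shows "four_block_mat A1 B1 C1 D1 = four_block_mat A2 B2 C2 D2 \<longleftrightarrow> A1 = A2 \<and> B1 = B2 \<and> C1 = C2 \<and> D1 = D2"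
proof (intro iffI conjI)
  assume "four_block_mat A1 B1 C1 D1 = four_block_mat A2 B2 C2 D2"
  then have e: "four_block_mat A1 B1 C1 D1 $$ (i,j) = four_block_mat A2 B2 C2 D2 $$ (i,j)" for i j
    by simp
  show "A1 = A2"
  proof (rule eq_matI)
    fix i j assume "i < dim_row A2" "j < dim_col A2"
    then show "A1 $$ (i,j) = A2 $$ (i,j)" using e[of i j] assms by auto
  qed (use assms in auto)
  show "B1 = B2"
  proof (rule eq_matI)
    fix i j assume "i < dim_row B2" "j < dim_col B2"
    then show "B1 $$ (i,j) = B2 $$ (i,j)" using e[of i "j + c1"] assms by auto
  qed (use assms in auto)
  show "C1 = C2"
  proof (rule eq_matI)
    fix i j assume "i < dim_row C2" "j < dim_col C2"
    then show "C1 $$ (i,j) = C2 $$ (i,j)" using e[of "i + r1" j] assms by auto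
  qed (use assms in auto)
  show "D1 = D2"
  proof (rule eq_matI)
    fix i j assume "i < dim_row D2" "j < dim_col D2"
    then show "D1 $$ (i,j) = D2 $$ (i,j)" using e[of "i + r1" "j + c1"] assms by auto
  qed (use assms in auto)
qed simp

lemma four_block_congruence:
  fixes A B C D G1 G2 :: "'a :: comm_ring_1 mat"
  assumes A: "A \<in> carrier_mat k k" and B: "B \<in> carrier_mat k k" and C: "C \<in> carrier_mat k k"
    and D: "D \<in> carrier_mat k k" and G1: "G1 \<in> carrier_mat k k" and G2: "G2 \<in> carrier_mat k k"
  shows "four_block_mat A B C D * four_block_mat G1 (0\<^sub>m k k) (0\<^sub>m k k) G2 * transpose_mat (four_block_mat A B C D)
    = four_block_mat (A * G1 * transpose_mat A + B * G2 * transpose_mat B) (A * G1 * transpose_mat C + B * G2 * transpose_mat D)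
                     (C * G1 * transpose_mat A + D * G2 * transpose_mat B) (C * G1 * transpose_mat C + D * G2 * transpose_mat D)"
proof -
  have Z: "0\<^sub>m k k \<in> carrier_mat k k" by simp
  have "four_block_mat A B C D * four_block_mat G1 (0\<^sub>m k k) (0\<^sub>m k k) G2
      = four_block_mat (A * G1) (B * G2) (C * G1) (D * G2)"
    using A B C D G1 G2 by (simp add: mult_four_block_mat[OF A B C D G1 Z Z G2])
  moreover have "transpose_mat (four_block_mat A B C D)
      = four_block_mat (transpose_mat A) (transpose_mat C) (transpose_mat B) (transpose_mat D)"
    by (rule transpose_four_block_mat[OF A B C D])
  ultimately show ?thesis
    by (simp only: mult_four_block_mat[OF mult_carrier_mat[OF A G1] mult_carrier_mat[OF B G2]
        mult_carrier_mat[OF C G1] mult_carrier_mat[OF D G2] transpose_carrier_mat[THEN iffD2, OF A]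
        transpose_carrier_mat[THEN iffD2, OF C] transpose_carrier_mat[THEN iffD2, OF B]
        transpose_carrier_mat[THEN iffD2, OF D]])
qed

lemma four_block_congruence_upper_right_index:
  fixes A B C D G1 G2 :: "'a :: comm_ring_1 mat"
  assumes A: "A \<in> carrier_mat k k" and B: "B \<in> carrier_mat k k" and C: "C \<in> carrier_mat k k"
    and D: "D \<in> carrier_mat k k" and G1: "G1 \<in> carrier_mat k k" and G2: "G2 \<in> carrier_mat k k"
    and i: "i < k" and j: "j < k"
  shows "(four_block_mat A B C D * four_block_mat G1 (0\<^sub>m k k) (0\<^sub>m k k) G2 * transpose_mat (four_block_mat A B C D))
      $$ (i, k + j) = (A * G1 * transpose_mat C + B * G2 * transpose_mat D) $$ (i,j)"
  unfolding four_block_congruence[OF A B C D G1 G2] using i j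
  by (simp del: index_mult_mat(1) index_add_mat(1) add: carrier_matD[OF A] carrier_matD[OF B]
      carrier_matD[OF C] carrier_matD[OF D])

lemma zero_blocks_if_congruence_upper_right_zero:
  fixes A B C D :: "real mat"
  assumes A: "A \<in> carrier_mat k k" and B: "B \<in> carrier_mat k k" and C: "C \<in> carrier_mat k k"
    and D: "D \<in> carrier_mat k k"
    and vanish: "\<And>v w. v \<in> carrier_vec k \<Longrightarrow> w \<in> carrier_vec k \<Longrightarrow>
      A * one_plus_outer k v * transpose_mat C + B * one_plus_outer k w * transpose_mat D = 0\<^sub>m k k"
  shows "(A = 0\<^sub>m k k \<or> C = 0\<^sub>m k k) \<and> (B = 0\<^sub>m k k \<or> D = 0\<^sub>m k k)"
proof
  have cong: "X * one_plus_outer k (0\<^sub>v k) * transpose_mat Y \<in> carrier_mat k k"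
    if "X \<in> carrier_mat k k" "Y \<in> carrier_mat k k" for X Y
    using that one_plus_outer_carrier by (intro mult_carrier_mat) auto
  show "A = 0\<^sub>m k k \<or> C = 0\<^sub>m k k"
    by (rule zero_mat_if_rank_one_congruence_const[OF A C cong[OF B D]]) (rule vanish; simp)
  show "B = 0\<^sub>m k k \<or> D = 0\<^sub>m k k"
  proof (rule zero_mat_if_rank_one_congruence_const[OF B D cong[OF A C]])
    fix w :: "real vec" assume w: "w \<in> carrier_vec k"
    then have "B * one_plus_outer k w * transpose_mat D \<in> carrier_mat k k"
      using B D one_plus_outer_carrier by (intro mult_carrier_mat) auto
    then show "B * one_plus_outer k w * transpose_mat D + A * one_plus_outer k (0\<^sub>v k) * transpose_mat C = 0\<^sub>m k k"
      using vanish[OF zero_carrier_vec w] by (subst comm_add_mat[OF _ cong[OF A C]])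
  qed
qed

lemma symplectic_four_block_diag_blocks:
  assumes A: "A \<in> carrier_mat (2*n) (2*n)" and B: "B \<in> carrier_mat (2*n) (2*n)"
    and C: "C \<in> carrier_mat (2*n) (2*n)" and D: "D \<in> carrier_mat (2*n) (2*n)"
    and S: "symplectic (2*n) (four_block_mat A B C D)"
  shows "A * symp_form n * transpose_mat A + B * symp_form n * transpose_mat B = symp_form n"
    and "C * symp_form n * transpose_mat C + D * symp_form n * transpose_mat D = symp_form n"
proof -
  let ?J = "symp_form n" and ?O = "0\<^sub>m (2*n) (2*n)"
  have J: "?J \<in> carrier_mat (2*n) (2*n)" by (rule symp_form_carrier)
  have cong: "X * ?J * transpose_mat Y + Z * ?J * transpose_mat W \<in> carrier_mat (2*n) (2*n)"
    if "X \<in> carrier_mat (2*n) (2*n)" "Y \<in> carrier_mat (2*n) (2*n)" "Z \<in> carrier_mat (2*n) (2*n)"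
      "W \<in> carrier_mat (2*n) (2*n)" for X Y Z W
    using that J by (intro add_carrier_mat mult_carrier_mat) auto
  have "four_block_mat (A * ?J * transpose_mat A + B * ?J * transpose_mat B) (A * ?J * transpose_mat C + B * ?J * transpose_mat D)
                     (C * ?J * transpose_mat A + D * ?J * transpose_mat B) (C * ?J * transpose_mat C + D * ?J * transpose_mat D)
      = four_block_mat ?J ?O ?O ?J"
    using S unfolding symplectic_def symp_form_double four_block_congruence[OF A B C D J J] by simp
  then show "A * ?J * transpose_mat A + B * ?J * transpose_mat B = ?J"
    and "C * ?J * transpose_mat C + D * ?J * transpose_mat D = ?J"
    by (simp_all only: four_block_mat_inject[OF cong[OF A A B B] J cong[OF A C B D] zero_carrier_mat
        cong[OF C A D B] zero_carrier_mat cong[OF C C D D] J])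
qed

lemma symplectic_four_block_cases:
  assumes n: "n \<ge> 1"
    and A: "A \<in> carrier_mat (2*n) (2*n)" and B: "B \<in> carrier_mat (2*n) (2*n)"
    and C: "C \<in> carrier_mat (2*n) (2*n)" and D: "D \<in> carrier_mat (2*n) (2*n)"
    and S: "symplectic (2*n) (four_block_mat A B C D)"
    and AC: "A = 0\<^sub>m (2*n) (2*n) \<or> C = 0\<^sub>m (2*n) (2*n)" and BD: "B = 0\<^sub>m (2*n) (2*n) \<or> D = 0\<^sub>m (2*n) (2*n)"
  shows "symplectic n A \<and> symplectic n D \<and> B = 0\<^sub>m (2*n) (2*n) \<and> C = 0\<^sub>m (2*n) (2*n)
    \<or> symplectic n B \<and> symplectic n C \<and> A = 0\<^sub>m (2*n) (2*n) \<and> D = 0\<^sub>m (2*n) (2*n)"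
proof -
  let ?O = "0\<^sub>m (2*n) (2*n)" and ?J = "symp_form n"
  note AB = symplectic_four_block_diag_blocks(1)[OF A B C D S]
    and CD = symplectic_four_block_diag_blocks(2)[OF A B C D S]
  have zero_cong: "?O * ?J * transpose_mat ?O = ?O"
    using symp_form_carrier[of n] by simp
  have cong_carrier: "X * ?J * transpose_mat X \<in> carrier_mat (2*n) (2*n)"
    if "X \<in> carrier_mat (2*n) (2*n)" for X
    using that symp_form_carrier[of n] by auto
  have "A = ?O \<and> D = ?O \<or> B = ?O \<and> C = ?O"
    using AC BD AB CD zero_cong symp_form_nonzero[OF n] by auto
  then show ?thesis
  proof (elim disjE conjE)
    assume "A = ?O" "D = ?O"
    then show ?thesis
      using AB CD zero_cong B C cong_carrier[OF B] cong_carrier[OF C] by (simp add: symplectic_def)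
  next
    assume "B = ?O" "C = ?O"
    then show ?thesis
      using AB CD zero_cong A D cong_carrier[OF A] cong_carrier[OF D] by (simp add: symplectic_def)
  qed
qed

theorem lemma1:
  fixes n :: nat and S :: "real mat"
  assumes "n \<ge> 1"
    and "symplectic (2*n) S"
    and "\<forall>G1 G2. covariance_matrix n G1 \<and> covariance_matrix n G2 \<longrightarrow>
           (let M = S * four_block_mat G1 (0\<^sub>m (2*n) (2*n)) (0\<^sub>m (2*n) (2*n)) G2 * transpose_mat S
            in \<forall>i j. (i < 2*n \<and> 2*n \<le> j \<and> j < 4*n \<longrightarrow> M $$ (i,j) = 0) \<and>
                     (2*n \<le> i \<and> i < 4*n \<and> j < 2*n \<longrightarrow> M $$ (i,j) = 0))"
  shows "(\<exists>A D. symplectic n A \<and> symplectic n D \<and>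
            S = four_block_mat A (0\<^sub>m (2*n) (2*n)) (0\<^sub>m (2*n) (2*n)) D)
       \<or> (\<exists>B C. symplectic n B \<and> symplectic n C \<and>
            S = four_block_mat (0\<^sub>m (2*n) (2*n)) B C (0\<^sub>m (2*n) (2*n)))"
proof -
  let ?O = "0\<^sub>m (2*n) (2*n)"
  obtain A B C D where split: "split_block S (2*n) (2*n) = (A, B, C, D)"
    by (metis prod_cases4)
  have "dim_row S = 2*n + 2*n" "dim_col S = 2*n + 2*n"
    using assms(2) by (auto simp: symplectic_def)
  note blocks = split_block[OF split this]
  note A = blocks(1) and B = blocks(2) and C = blocks(3) and D = blocks(4) and S = blocks(5)
  have "A * G1 * transpose_mat C + B * G2 * transpose_mat D = ?O"
    if G: "covariance_matrix n G1" "covariance_matrix n G2" for G1 G2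
  proof (rule eq_matI)
    fix i j assume "i < dim_row ?O" "j < dim_col ?O"
    then have ij: "i < 2*n" "j < 2*n" by simp_all
    have "(S * four_block_mat G1 ?O ?O G2 * transpose_mat S) $$ (i, 2*n + j) = 0"
      using assms(3) G ij by (simp del: index_mult_mat add: Let_def)
    then show "(A * G1 * transpose_mat C + B * G2 * transpose_mat D) $$ (i,j) = ?O $$ (i,j)"
      using G ij unfolding S covariance_matrix_def
      by (simp del: index_mult_mat add: four_block_congruence_upper_right_index[OF A B C D _ _ ij])
  qed (use A B C D in auto)
  then have "(A = ?O \<or> C = ?O) \<and> (B = ?O \<or> D = ?O)"
    by (intro zero_blocks_if_congruence_upper_right_zero[OF A B C D]) (simp add: covariance_matrix_one_plus_outer)
  then show ?thesis
    using symplectic_four_block_cases[OF assms(1) A B C D assms(2)[unfolded S]] unfolding S by blast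
qed

end
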